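(* Let $e_1,\dots,e_k\in\mathbb{C}^{n\times n}$ be an anticommuting family and let $p\le k$. Assume that for every $A\subseteq[k]$ with $|A|\le p$ we have $\prod_{i\in A}e_i^2\neq 0$. Then the matrices $e_A$ with $A\subseteq[k]$, $|A|\le p$ and $|A|$ even are linearly independent; likewise the matrices $e_A$ with $A\subseteq [k]$, $|A|\le p$ and $|A|$ odd are linearly independent.
   Context: A family $e_1,\dots,e_k$ of complex $n\times n$ matrices is called anticommuting if $e_ie_j=-e_je_i$ for all distinct $i,j\in[k]=\{1,\dots,k\}$. For $A=\{i_1,\dots,i_r\}\subseteq[k]$ with $i_1<\dots<i_r$, $e_A:=e_{i_1}e_{i_2}\cdots e_{i_r}$, and $e_\emptyset=I_n$. (The matrices $e_i^2$ commute with each other, so $\prod_{i\in A}e_i^2$ does not depend on the order; the empty product is $I_n$.) *)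

theory Defs
  imports "HOL-Analysis.Analysis"
begin

text \<open>Complex n x n matrices are modelled as complex^'n^'n (n = CARD('n), arbitrary).
  A family e_1,...,e_k is a function e :: nat => matrix, used on indices 1..k.\<close>

definition anticommuting :: "nat \<Rightarrow> (nat \<Rightarrow> complex^'n^'n) \<Rightarrow> bool" where
  "anticommuting k e \<longleftrightarrow>
     (\<forall>i\<in>{1..k}. \<forall>j\<in>{1..k}. i \<noteq> j \<longrightarrow> e i ** e j = - (e j ** e i))"

definition eprod :: "(nat \<Rightarrow> complex^'n^'n) \<Rightarrow> nat set \<Rightarrow> complex^'n^'n" where
  "eprod e A = foldr (\<lambda>i M. e i ** M) (sorted_list_of_set A) (mat 1)"

text \<open>prod_{i in A} e_i^2 (order irrelevant since the squares commute; we use increasing order).\<close>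
definition sqprod :: "(nat \<Rightarrow> complex^'n^'n) \<Rightarrow> nat set \<Rightarrow> complex^'n^'n" where
  "sqprod e A = foldr (\<lambda>i M. (e i ** e i) ** M) (sorted_list_of_set A) (mat 1)"

definition lin_indep_family :: "'a set \<Rightarrow> ('a \<Rightarrow> complex^'n^'n) \<Rightarrow> bool" where
  "lin_indep_family S f \<longleftrightarrow>
     (\<forall>c :: 'a \<Rightarrow> complex. (\<Sum>A\<in>S. (\<chi> i j. c A * f A $ i $ j)) = (0 :: complex^'n^'n) \<longrightarrow> (\<forall>A\<in>S. c A = 0))"

end

theory Submission
  imports Defs
begin

text \<open>Suppose \<open>\<Sum>\<^sub>A c\<^sub>A e\<^sub>A = 0\<close> over sets \<open>A\<close> of one parity and pick \<open>B\<close> inclusion-maximal with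
  \<open>c\<^sub>B \<noteq> 0\<close>. For \<open>j \<in> [k]\<close>, \<open>e\<^sub>j\<close> commutes with every \<open>e\<^sub>A\<close> up to a sign that depends on \<open>A\<close> only
  through whether \<open>j \<in> A\<close> (the parity of \<open>|A|\<close> being fixed). Comparing \<open>e\<^sub>j X\<close> with \<open>\<plusminus>X e\<^sub>j\<close> for
  \<open>X = 0\<close> therefore kills all terms with \<open>j \<notin> A\<close> and multiplies the others by \<open>e\<^sub>j\<close> on the right.
  Doing this successively for the elements of \<open>B\<close> leaves \<open>\<Sum>\<^bsub>A \<supseteq> B\<^esub> c\<^sub>A e\<^sub>A e\<^sub>B = 0\<close>, i.e.
  \<open>c\<^sub>B e\<^sub>B\<^sup>2 = 0\<close> by maximality. But \<open>e\<^sub>B\<^sup>2 = \<plusminus>\<Prod>\<^bsub>i\<in>B\<^esub> e\<^sub>i\<^sup>2 \<noteq> 0\<close>, so \<open>c\<^sub>B = 0\<close>.\<close>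

definition cscale :: "complex \<Rightarrow> complex^'n^'m \<Rightarrow> complex^'n^'m" where
  "cscale c M = (\<chi> i j. c * M $ i $ j)"

lemma cscale_matrix_mult_left: "cscale c A ** B = cscale c (A ** B)"
  by (simp add: cscale_def matrix_matrix_mult_def vec_eq_iff sum_distrib_left mult.assoc)

lemma matrix_mult_cscale_right: "A ** cscale c B = cscale c (A ** B)"
  by (simp add: cscale_def matrix_matrix_mult_def vec_eq_iff sum_distrib_left mult.left_commute)

lemma cscale_cscale: "cscale a (cscale b M) = cscale (a * b) M"
  by (simp add: cscale_def vec_eq_iff mult.assoc)

lemma cscale_one [simp]: "cscale 1 M = M"
  by (simp add: cscale_def vec_eq_iff)

lemma cscale_zero_right [simp]: "cscale c 0 = 0"
  by (simp add: cscale_def vec_eq_iff)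

lemma cscale_zero_left [simp]: "cscale 0 M = 0"
  by (simp add: cscale_def vec_eq_iff)

lemma cscale_minus_one: "cscale (- 1) M = - M"
  by (simp add: cscale_def vec_eq_iff)

lemma cscale_eq_0_iff: "cscale c M = 0 \<longleftrightarrow> c = 0 \<or> M = 0"
  by (auto simp: cscale_def vec_eq_iff)

lemma cscale_sum_right: "cscale c (\<Sum>A\<in>F. X A) = (\<Sum>A\<in>F. cscale c (X A))"
  by (simp add: cscale_def vec_eq_iff sum_distrib_left)

lemma cscale_diff_left: "cscale a M - cscale b M = cscale (a - b) M"
  by (simp add: cscale_def vec_eq_iff algebra_simps)

lemma matrix_add_rdistrib: "(A + B) ** C = A ** C + B ** C"
  by (simp add: matrix_matrix_mult_def vec_eq_iff distrib_right sum.distrib)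

lemma sum_matrix_mult_right:
  "(\<Sum>A\<in>F. X A) ** (M :: 'a::semiring_1^'n^'m) = (\<Sum>A\<in>F. X A ** M)"
  by (induction F rule: infinite_finite_induct) (simp_all add: matrix_add_rdistrib)

lemma sum_matrix_mult_left:
  "(M :: 'a::semiring_1^'n^'m) ** (\<Sum>A\<in>F. X A) = (\<Sum>A\<in>F. M ** X A)"
  by (induction F rule: infinite_finite_induct) (simp_all add: matrix_add_ldistrib)

definition eprod_list :: "(nat \<Rightarrow> complex^'n^'n) \<Rightarrow> nat list \<Rightarrow> complex^'n^'n" where
  "eprod_list e xs = foldr (\<lambda>i M. e i ** M) xs (mat 1)"

definition sqprod_list :: "(nat \<Rightarrow> complex^'n^'n) \<Rightarrow> nat list \<Rightarrow> complex^'n^'n" where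
  "sqprod_list e xs = foldr (\<lambda>i M. (e i ** e i) ** M) xs (mat 1)"

lemma eprod_list_simps [simp]:
  "eprod_list e [] = mat 1"
  "eprod_list e (x # xs) = e x ** eprod_list e xs"
  by (simp_all add: eprod_list_def)

lemma sqprod_list_simps [simp]:
  "sqprod_list e [] = mat 1"
  "sqprod_list e (x # xs) = (e x ** e x) ** sqprod_list e xs"
  by (simp_all add: sqprod_list_def)

lemma eprod_list_snoc: "eprod_list e (xs @ [x]) = eprod_list e xs ** e x"
  by (induction xs) (simp_all add: matrix_mul_assoc)

lemma eprod_eq_eprod_list: "eprod e A = eprod_list e (sorted_list_of_set A)"
  by (simp add: eprod_def eprod_list_def)

lemma sqprod_eq_sqprod_list: "sqprod e A = sqprod_list e (sorted_list_of_set A)"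
  by (simp add: sqprod_def sqprod_list_def)

lemma anticommuting_swap:
  assumes "anticommuting k e" "i \<in> {1..k}" "j \<in> {1..k}"
  shows "e j ** e i = cscale (if i = j then 1 else - 1) (e i ** e j)"
proof (cases "i = j")
  case True
  then show ?thesis
    by (simp only: simp_thms(6) if_True cscale_one)
next
  case False
  have "e j ** e i = - (e i ** e j)"
    using assms(1) assms(3,2) not_sym[OF False] unfolding anticommuting_def by blast
  with False show ?thesis
    by (simp only: if_False cscale_minus_one)
qed

lemma e_eprod_list_commute:
  assumes ac: "anticommuting k e" and j: "j \<in> {1..k}"
    and "set xs \<subseteq> {1..k}" "distinct xs"
  shows "e j ** eprod_list e xs
    = cscale ((- 1) ^ length xs * (if j \<in> set xs then - 1 else 1)) (eprod_list e xs ** e j)"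
  using assms(3,4)
proof (induction xs)
  case Nil
  then show ?case by simp
next
  case (Cons x xs)
  let ?s = "(- 1 :: complex) ^ length xs * (if j \<in> set xs then - 1 else 1)"
  have x: "x \<in> {1..k}" and xs: "set xs \<subseteq> {1..k}" "distinct xs" "x \<notin> set xs"
    using Cons.prems by simp_all
  note IH = Cons.IH[OF xs(1,2)]
  have sign: "(if x = j then 1 else - 1) * ?s
      = (- 1) ^ length (x # xs) * (if j \<in> set (x # xs) then - 1 else 1)"
    using xs(3) by (cases "x = j") simp_all
  have "e j ** eprod_list e (x # xs) = (e j ** e x) ** eprod_list e xs"
    by (simp only: eprod_list_simps matrix_mul_assoc)
  also have "\<dots> = cscale (if x = j then 1 else - 1) (e x ** (e j ** eprod_list e xs))"
    by (simp only: anticommuting_swap[OF ac x j] cscale_matrix_mult_left matrix_mul_assoc)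
  also have "\<dots> = cscale ((if x = j then 1 else - 1) * ?s) (eprod_list e (x # xs) ** e j)"
    by (simp only: IH matrix_mult_cscale_right cscale_cscale eprod_list_simps matrix_mul_assoc)
  finally show ?case
    by (simp only: sign)
qed

lemma eprod_list_square:
  assumes ac: "anticommuting k e" and "set xs \<subseteq> {1..k}" "distinct xs"
  shows "eprod_list e xs ** eprod_list e xs
    = cscale ((- 1) ^ (length xs choose 2)) (sqprod_list e xs)"
  using assms(2,3)
proof (induction xs)
  case Nil
  then show ?case by (simp add: binomial_eq_0)
next
  case (Cons x xs)
  let ?t = "(- 1 :: complex) ^ length xs"
  have x: "x \<in> {1..k}" and IH: "eprod_list e xs ** eprod_list e xs
      = cscale ((- 1) ^ (length xs choose 2)) (sqprod_list e xs)"
    using Cons by auto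
  have "e x ** eprod_list e xs = cscale ?t (eprod_list e xs ** e x)"
    using e_eprod_list_commute[OF ac x, of xs] Cons.prems by simp
  moreover have "?t * ?t = 1"
    by (simp flip: power_mult_distrib)
  ultimately have swap: "eprod_list e xs ** e x = cscale ?t (e x ** eprod_list e xs)"
    by (simp only: cscale_cscale cscale_one)
  have "Suc (length xs) choose 2 = length xs + (length xs choose 2)"
    by (simp add: numeral_2_eq_2)
  then have sign: "?t * (- 1) ^ (length xs choose 2) = (- 1) ^ (length (x # xs) choose 2)"
    by (simp add: power_add)
  have "eprod_list e (x # xs) ** eprod_list e (x # xs)
      = e x ** (eprod_list e xs ** e x) ** eprod_list e xs"
    by (simp only: eprod_list_simps matrix_mul_assoc)
  also have "\<dots> = cscale ?t ((e x ** e x) ** (eprod_list e xs ** eprod_list e xs))"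
    by (simp only: swap cscale_matrix_mult_left matrix_mult_cscale_right matrix_mul_assoc)
  also have "\<dots> = cscale ((- 1) ^ (length (x # xs) choose 2)) (sqprod_list e (x # xs))"
    by (simp only: IH matrix_mult_cscale_right cscale_cscale sign sqprod_list_simps)
  finally show ?case .
qed

lemma sum_filter_eq_0_by_commutation:
  fixes Y :: "'a \<Rightarrow> complex^'n^'n"
  assumes "finite F" and "\<sigma> \<noteq> 0"
    and commute: "\<And>A. A \<in> F \<Longrightarrow> E ** Y A = cscale (if Q A then - \<sigma> else \<sigma>) (Y A ** E)"
    and sum_eq_0: "(\<Sum>A\<in>F. cscale (c A) (Y A)) = 0"
  shows "(\<Sum>A\<in>{A\<in>F. Q A}. cscale (c A) (Y A ** E)) = 0"
proof -
  let ?X = "\<Sum>A\<in>F. cscale (c A) (Y A)"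
  have "0 = E ** ?X - cscale \<sigma> (?X ** E)"
    by (simp add: sum_eq_0)
  also have "\<dots> = (\<Sum>A\<in>F. cscale (c A) (E ** Y A) - cscale (\<sigma> * c A) (Y A ** E))"
    by (simp add: sum_matrix_mult_left sum_matrix_mult_right cscale_sum_right sum_subtractf
        cscale_matrix_mult_left matrix_mult_cscale_right cscale_cscale)
  also have "\<dots> = (\<Sum>A\<in>F. if Q A then cscale (- 2 * \<sigma>) (cscale (c A) (Y A ** E)) else 0)"
    by (intro sum.cong refl) (simp add: commute cscale_cscale cscale_diff_left cscale_eq_0_iff mult.assoc)
  also have "\<dots> = (\<Sum>A\<in>{A\<in>F. Q A}. cscale (- 2 * \<sigma>) (cscale (c A) (Y A ** E)))"
    by (simp only: sum.inter_filter[OF \<open>finite F\<close>])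
  also have "\<dots> = cscale (- 2 * \<sigma>) (\<Sum>A\<in>{A\<in>F. Q A}. cscale (c A) (Y A ** E))"
    by (simp only: cscale_sum_right)
  finally show ?thesis
    using \<open>\<sigma> \<noteq> 0\<close> by (simp add: cscale_eq_0_iff)
qed

lemma sum_supersets_eq_0:
  fixes e :: "nat \<Rightarrow> complex^'n^'n" and d :: nat
  assumes ac: "anticommuting k e" and S: "S \<subseteq> Pow {1..k}"
    and parity: "\<And>A. A \<in> S \<Longrightarrow> even (card A) = even d"
    and sum_eq_0: "(\<Sum>A\<in>S. cscale (c A) (eprod e A)) = 0"
    and "set js \<subseteq> {1..k}" "distinct js"
  shows "(\<Sum>A\<in>{A\<in>S. set js \<subseteq> A}. cscale (c A) (eprod e A ** eprod_list e js)) = 0"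
  using assms(5,6)
proof (induction js rule: rev_induct)
  case Nil
  then show ?case using sum_eq_0 by simp
next
  case (snoc x js)
  have x: "x \<in> {1..k}" "x \<notin> set js" and js: "set js \<subseteq> {1..k}" "distinct js"
    using snoc.prems by auto
  let ?\<sigma> = "(- 1 :: complex) ^ (d + length js)"
  have commute: "e x ** (eprod e A ** eprod_list e js)
      = cscale (if x \<in> A then - ?\<sigma> else ?\<sigma>) ((eprod e A ** eprod_list e js) ** e x)"
    if "A \<in> S" for A
  proof -
    have "A \<subseteq> {1..k}"
      using that S by auto
    moreover from this have "finite A"
      by (rule finite_subset) simp
    ultimately have A: "set (sorted_list_of_set A) \<subseteq> {1..k}" "finite A"
      by simp_all
    have "(- 1 :: complex) ^ card A = (- 1) ^ d"
      using parity[OF that] by (simp add: minus_one_power_iff)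
    then have eA: "e x ** eprod e A
        = cscale ((- 1) ^ d * (if x \<in> A then - 1 else 1)) (eprod e A ** e x)"
      using e_eprod_list_commute[OF ac x(1) A(1)] A(2) by (simp add: eprod_eq_eprod_list)
    have ejs: "e x ** eprod_list e js = cscale ((- 1) ^ length js) (eprod_list e js ** e x)"
      using e_eprod_list_commute[OF ac x(1) js] x(2) by simp
    have "e x ** (eprod e A ** eprod_list e js) = (e x ** eprod e A) ** eprod_list e js"
      by (simp add: matrix_mul_assoc)
    also have "\<dots> = cscale ((- 1) ^ d * (if x \<in> A then - 1 else 1))
        (eprod e A ** (e x ** eprod_list e js))"
      by (simp add: eA cscale_matrix_mult_left matrix_mul_assoc)
    also have "\<dots> = cscale (if x \<in> A then - ?\<sigma> else ?\<sigma>) ((eprod e A ** eprod_list e js) ** e x)"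
      by (simp add: ejs matrix_mult_cscale_right cscale_cscale matrix_mul_assoc power_add)
    finally show ?thesis .
  qed
  have "finite S"
    using S by (rule finite_subset) simp
  have "(\<Sum>A\<in>{A\<in>{A\<in>S. set js \<subseteq> A}. x \<in> A}.
      cscale (c A) ((eprod e A ** eprod_list e js) ** e x)) = 0"
  proof (rule sum_filter_eq_0_by_commutation[where Y = "\<lambda>A. eprod e A ** eprod_list e js"
        and \<sigma> = ?\<sigma>])
    show "finite {A\<in>S. set js \<subseteq> A}"
      using \<open>finite S\<close> by simp
    show "?\<sigma> \<noteq> 0"
      by simp
    show "e x ** (eprod e A ** eprod_list e js)
        = cscale (if x \<in> A then - ?\<sigma> else ?\<sigma>) ((eprod e A ** eprod_list e js) ** e x)"
      if "A \<in> {A\<in>S. set js \<subseteq> A}" for A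
      using commute that by simp
    show "(\<Sum>A\<in>{A\<in>S. set js \<subseteq> A}. cscale (c A) (eprod e A ** eprod_list e js)) = 0"
      by (rule snoc.IH[OF js])
  qed
  moreover have "{A\<in>{A\<in>S. set js \<subseteq> A}. x \<in> A} = {A\<in>S. set (js @ [x]) \<subseteq> A}"
    by auto
  ultimately show ?case
    by (simp add: eprod_list_snoc matrix_mul_assoc)
qed

lemma lin_indep_family_eprod:
  fixes e :: "nat \<Rightarrow> complex^'n^'n" and d :: nat
  assumes ac: "anticommuting k e" and S: "S \<subseteq> Pow {1..k}"
    and parity: "\<And>A. A \<in> S \<Longrightarrow> even (card A) = even d"
    and nonzero: "\<And>A. A \<in> S \<Longrightarrow> sqprod e A \<noteq> 0"
  shows "lin_indep_family S (eprod e)"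
  unfolding lin_indep_family_def cscale_def[symmetric]
proof (intro allI impI)
  fix c :: "nat set \<Rightarrow> complex"
  assume sum_eq_0: "(\<Sum>A\<in>S. cscale (c A) (eprod e A)) = 0"
  have "finite S"
    using S by (rule finite_subset) simp
  show "\<forall>A\<in>S. c A = 0"
  proof (rule ccontr)
    let ?N = "{A\<in>S. c A \<noteq> 0}"
    assume "\<not> (\<forall>A\<in>S. c A = 0)"
    then have "?N \<noteq> {}"
      by blast
    moreover have "finite ?N"
      using \<open>finite S\<close> by simp
    ultimately obtain B where "B \<in> ?N" and maximal: "\<forall>A\<in>?N. B \<subseteq> A \<longrightarrow> B = A"
      using finite_has_maximal by blast
    then have B: "B \<in> S" "c B \<noteq> 0"
      by simp_all
    have "B \<subseteq> {1..k}"
      using B(1) S by blast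
    then have "finite B"
      by (rule finite_subset) simp
    have "(\<Sum>A\<in>{A\<in>S. B \<subseteq> A}. cscale (c A) (eprod e A ** eprod e B))
        = (\<Sum>A\<in>{B}. cscale (c A) (eprod e A ** eprod e B))"
    proof (rule sum.mono_neutral_right)
      show "finite {A\<in>S. B \<subseteq> A}"
        using \<open>finite S\<close> by simp
      show "{B} \<subseteq> {A\<in>S. B \<subseteq> A}"
        using B(1) by simp
      show "\<forall>A\<in>{A\<in>S. B \<subseteq> A} - {B}. cscale (c A) (eprod e A ** eprod e B) = 0"
        using maximal by auto
    qed
    moreover have "(\<Sum>A\<in>{A\<in>S. B \<subseteq> A}. cscale (c A) (eprod e A ** eprod e B)) = 0"
      using sum_supersets_eq_0[OF ac S parity sum_eq_0, of "sorted_list_of_set B"]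
        \<open>B \<subseteq> {1..k}\<close> \<open>finite B\<close>
      by (simp add: eprod_eq_eprod_list)
    ultimately have "eprod e B ** eprod e B = 0"
      using B(2) by (simp add: cscale_eq_0_iff)
    moreover have "eprod e B ** eprod e B = cscale ((- 1) ^ (card B choose 2)) (sqprod e B)"
      using eprod_list_square[OF ac, of "sorted_list_of_set B"] \<open>B \<subseteq> {1..k}\<close> \<open>finite B\<close>
      by (simp add: eprod_eq_eprod_list sqprod_eq_sqprod_list)
    ultimately show False
      using nonzero[OF B(1)] by (simp add: cscale_eq_0_iff)
  qed
qed

theorem lemma4p2:
  fixes e :: "nat \<Rightarrow> complex^'n^'n" and k p :: nat
  assumes "anticommuting k e"
    and "p \<le> k"
    and "\<forall>A. A \<subseteq> {1..k} \<and> card A \<le> p \<longrightarrow> sqprod e A \<noteq> 0"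
  shows "lin_indep_family {A. A \<subseteq> {1..k} \<and> card A \<le> p \<and> even (card A)} (eprod e)
       \<and> lin_indep_family {A. A \<subseteq> {1..k} \<and> card A \<le> p \<and> odd (card A)} (eprod e)"
proof
  show "lin_indep_family {A. A \<subseteq> {1..k} \<and> card A \<le> p \<and> even (card A)} (eprod e)"
    by (rule lin_indep_family_eprod[where d = 0]) (use assms(1,3) in auto)
  show "lin_indep_family {A. A \<subseteq> {1..k} \<and> card A \<le> p \<and> odd (card A)} (eprod e)"
    by (rule lin_indep_family_eprod[where d = 1]) (use assms(1,3) in auto)
qed

end
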